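(* Let $\{x_j\}_{j\ge1}$ be a bounded sequence in $\mathbb{R}$ taking infinitely many distinct values, and $\{a_j\}_{j\ge1}$ a summable sequence of positive numbers. Let $\mu=\sum_{j\ge1}a_j\delta_{x_j}$ and $d=\sup_{j,k}|x_j-x_k|$. Then the monic orthogonal polynomials $P_n(x;d\mu)$ satisfy, for all $n\ge1$, $$\|P_n\|_{L^2(\mathbb{R},d\mu)}\le d^n\Bigl(\sum_{j=n+1}^\infty a_j\Bigr)^{1/2}.$$ *)

theory Defs
  imports "HOL-Analysis.Analysis" "HOL-Computational_Algebra.Polynomial"
begin

text \<open>Discrete measure mu = sum_j a_j delta_{x_j} (0-based indices here).
  L2(mu) inner product of polynomials, written out as the series it unfolds to.\<close>

definition disc_inner :: "(nat \<Rightarrow> real) \<Rightarrow> (nat \<Rightarrow> real) \<Rightarrow> real poly \<Rightarrow> real poly \<Rightarrow> real" where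
  "disc_inner a x p q = (\<Sum>j. a j * poly p (x j) * poly q (x j))"

definition disc_L2norm :: "(nat \<Rightarrow> real) \<Rightarrow> (nat \<Rightarrow> real) \<Rightarrow> real poly \<Rightarrow> real" where
  "disc_L2norm a x p = sqrt (\<Sum>j. a j * (poly p (x j))\<^sup>2)"

definition monic_orth_poly :: "(nat \<Rightarrow> real) \<Rightarrow> (nat \<Rightarrow> real) \<Rightarrow> nat \<Rightarrow> real poly \<Rightarrow> bool" where
  "monic_orth_poly a x n P \<longleftrightarrow>
     degree P = n \<and> lead_coeff P = 1 \<and>
     (\<forall>q. degree q < n \<longrightarrow> disc_inner a x P q = 0)"

end

theory Submission
  imports Defs
begin

(* The bound follows from the extremal property of monic orthogonal polynomials:
   P_n minimises the weighted L2 norm among all monic polynomials of degree n,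
   because P_n is orthogonal to Q - P_n for every such Q.  Testing with the node
   polynomial Q = (X - x_0) ... (X - x_{n-1}), which vanishes at the first n mass
   points and is bounded by d^n at every mass point, gives
     ||P_n||^2 <= sum_j a_j Q(x_j)^2 <= d^(2n) * sum_{j>=n} a_j. *)

lemma poly_bounded_on_bounded_range:
  fixes x :: "nat \<Rightarrow> real"
  assumes "bounded (range x)"
  obtains B where "\<And>j. \<bar>poly p (x j)\<bar> \<le> B"
proof -
  obtain R where "\<forall>y\<in>range x. norm y \<le> R" using assms bounded_pos by blast
  then have R: "\<And>j. norm (x j) \<le> R" by simp
  have "bounded (poly p ` cball 0 R)"
    by (intro compact_imp_bounded compact_continuous_image continuous_intros) auto
  then obtain B where B: "\<forall>y\<in>poly p ` cball 0 R. norm y \<le> B"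
    using bounded_pos by blast
  have "\<bar>poly p (x j)\<bar> \<le> B" for j
    using B R[of j] by simp
  then show ?thesis by (rule that)
qed

lemma summable_weighted_poly_product:
  fixes x a :: "nat \<Rightarrow> real"
  assumes "bounded (range x)" "\<And>j. a j \<ge> 0" "summable a"
  shows "summable (\<lambda>j. a j * poly p (x j) * poly q (x j))"
proof -
  obtain B1 where B1: "\<And>j. \<bar>poly p (x j)\<bar> \<le> B1"
    using poly_bounded_on_bounded_range[OF assms(1)] by blast
  obtain B2 where B2: "\<And>j. \<bar>poly q (x j)\<bar> \<le> B2"
    using poly_bounded_on_bounded_range[OF assms(1)] by blast
  have "\<bar>poly p (x j)\<bar> * \<bar>poly q (x j)\<bar> \<le> B1 * B2" for j
    using B1[of j] B2[of j] by (intro mult_mono) (auto intro: order_trans[OF abs_ge_zero])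
  then have bound: "norm (a j * poly p (x j) * poly q (x j)) \<le> a j * (B1 * B2)" for j
    using assms(2)[of j] by (simp add: abs_mult mult.assoc mult_left_mono)
  have "summable (\<lambda>j. a j * (B1 * B2))" using assms(3) by (rule summable_mult2)
  then show ?thesis using bound by (rule summable_comparison_test')
qed

lemma degree_diff_monic_less:
  fixes P Q :: "'a::comm_ring_1 poly"
  assumes "degree P = n" "lead_coeff P = 1" "degree Q = n" "lead_coeff Q = 1" "n \<ge> 1"
  shows "degree (Q - P) < n"
proof (rule ccontr)
  assume "\<not> degree (Q - P) < n"
  moreover have "degree (Q - P) \<le> n" using assms degree_diff_le[of Q n P] by simp
  ultimately have deg: "degree (Q - P) = n" by simp
  have "coeff (Q - P) n = 0" using assms by simp
  then have "Q - P = 0" using deg by (metis leading_coeff_0_iff)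
  then show False using deg assms(5) by simp
qed

lemma monic_orth_poly_minimal:
  fixes x a :: "nat \<Rightarrow> real"
  assumes bounded: "bounded (range x)" and nonneg: "\<And>j. a j \<ge> 0" and "summable a"
    and "n \<ge> 1" and orth: "monic_orth_poly a x n P"
    and "degree Q = n" and "lead_coeff Q = 1"
  shows "(\<Sum>j. a j * (poly P (x j))\<^sup>2) \<le> (\<Sum>j. a j * (poly Q (x j))\<^sup>2)"
proof -
  define R where "R = Q - P"
  have "degree R < n"
    using orth assms(4,6,7) degree_diff_monic_less unfolding R_def monic_orth_poly_def by blast
  then have cross: "(\<Sum>j. a j * poly P (x j) * poly R (x j)) = 0"
    using orth unfolding monic_orth_poly_def disc_inner_def by blast
  have sum: "summable (\<lambda>j. a j * poly p (x j) * poly q (x j))" for p q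
    using summable_weighted_poly_product[OF bounded nonneg \<open>summable a\<close>] .
  have sum_sq: "summable (\<lambda>j. a j * (poly p (x j))\<^sup>2)" for p
    using sum[of p p] by (simp add: power2_eq_square mult.assoc)
  have sum_cross: "summable (\<lambda>j. 2 * (a j * poly P (x j) * poly R (x j)))"
    using sum by (rule summable_mult)
  have expand: "a j * (poly Q (x j))\<^sup>2 = (a j * (poly P (x j))\<^sup>2
      + 2 * (a j * poly P (x j) * poly R (x j))) + a j * (poly R (x j))\<^sup>2" for j
    unfolding R_def by (simp add: power2_eq_square algebra_simps)
  have "(\<Sum>j. a j * (poly Q (x j))\<^sup>2) = (\<Sum>j. a j * (poly P (x j))\<^sup>2
      + 2 * (a j * poly P (x j) * poly R (x j))) + (\<Sum>j. a j * (poly R (x j))\<^sup>2)"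
    unfolding expand by (intro suminf_add [symmetric] summable_add sum_sq sum_cross)
  also have "\<dots> = (\<Sum>j. a j * (poly P (x j))\<^sup>2) + (\<Sum>j. a j * (poly R (x j))\<^sup>2)"
    using suminf_add[OF sum_sq sum_cross] suminf_mult[OF sum, of 2] cross by simp
  moreover have "(\<Sum>j. a j * (poly R (x j))\<^sup>2) \<ge> 0"
    by (intro suminf_nonneg sum_sq) (simp add: nonneg)
  ultimately show ?thesis by linarith
qed

definition node_poly :: "(nat \<Rightarrow> real) \<Rightarrow> nat \<Rightarrow> real poly" where
  "node_poly x n = (\<Prod>j<n. [:- x j, 1:])"

lemma poly_node_poly: "poly (node_poly x n) y = (\<Prod>j<n. y - x j)"
  unfolding node_poly_def by (simp add: poly_prod)

lemma degree_node_poly: "degree (node_poly x n) = n"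
  unfolding node_poly_def by (subst degree_prod_sum_eq) auto

lemma lead_coeff_node_poly: "lead_coeff (node_poly x n) = 1"
  unfolding node_poly_def by (simp add: lead_coeff_prod)

lemma node_poly_vanishes: "i < n \<Longrightarrow> poly (node_poly x n) (x i) = 0"
  unfolding poly_node_poly by (intro prod_zero) auto

lemma node_poly_bound:
  assumes "\<And>j k. \<bar>x j - x k\<bar> \<le> d"
  shows "\<bar>poly (node_poly x n) (x i)\<bar> \<le> d ^ n"
proof -
  have "\<bar>poly (node_poly x n) (x i)\<bar> = (\<Prod>j<n. \<bar>x i - x j\<bar>)"
    unfolding poly_node_poly by (rule abs_prod)
  also have "\<dots> \<le> (\<Prod>j<n. d)" by (rule prod_mono) (simp add: assms)
  finally show ?thesis by simp
qed

lemma diameter_upper: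
  fixes x :: "nat \<Rightarrow> real"
  assumes "bounded (range x)"
  shows "\<bar>x j - x k\<bar> \<le> (SUP jk\<in>(UNIV :: (nat \<times> nat) set). \<bar>x (fst jk) - x (snd jk)\<bar>)"
proof -
  obtain R where "\<forall>y\<in>range x. norm y \<le> R" using assms bounded_pos by blast
  then have R: "\<And>i. norm (x i) \<le> R" by simp
  have "bdd_above ((\<lambda>jk. \<bar>x (fst jk) - x (snd jk)\<bar>) ` UNIV)"
  proof (rule bdd_aboveI2)
    fix jk :: "nat \<times> nat"
    show "\<bar>x (fst jk) - x (snd jk)\<bar> \<le> 2 * R"
      using R[of "fst jk"] R[of "snd jk"] by simp
  qed
  from cSUP_upper[OF _ this, of "(j, k)"] show ?thesis by simp
qed

lemma weighted_sum_vanishing_prefix: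
  fixes a f :: "nat \<Rightarrow> real"
  assumes "\<And>j. a j \<ge> 0" "summable a"
    and vanish: "\<And>i. i < n \<Longrightarrow> f i = 0" and bound: "\<And>i. \<bar>f i\<bar> \<le> B"
  shows "(\<Sum>j. a j * (f j)\<^sup>2) \<le> B\<^sup>2 * (\<Sum>j. a (j + n))"
proof -
  have sq_le: "(f i)\<^sup>2 \<le> B\<^sup>2" for i
    using power_mono[OF bound[of i] abs_ge_zero, of 2] by simp
  have tail: "summable (\<lambda>j. a (j + n))" using assms(2) by (simp add: summable_iff_shift)
  have term_le: "a i * (f i)\<^sup>2 \<le> B\<^sup>2 * a i" for i
    using mult_left_mono[OF sq_le assms(1)] by (simp add: mult.commute)
  have sf: "summable (\<lambda>j. a j * (f j)\<^sup>2)"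
  proof (rule summable_comparison_test')
    show "summable (\<lambda>j. B\<^sup>2 * a j)" using assms(2) by (rule summable_mult)
    show "norm (a j * (f j)\<^sup>2) \<le> B\<^sup>2 * a j" for j
      using term_le[of j] assms(1)[of j] by simp
  qed
  have "(\<Sum>j. a j * (f j)\<^sup>2) = (\<Sum>j. a (j + n) * (f (j + n))\<^sup>2)"
    using suminf_minus_initial_segment[OF sf, of n] vanish by simp
  also have "\<dots> \<le> (\<Sum>j. B\<^sup>2 * a (j + n))"
  proof (rule suminf_le)
    show "summable (\<lambda>j. a (j + n) * (f (j + n))\<^sup>2)"
      using sf by (subst summable_iff_shift)
    show "summable (\<lambda>j. B\<^sup>2 * a (j + n))" using tail by (rule summable_mult)
  qed (rule term_le)
  also have "\<dots> = B\<^sup>2 * (\<Sum>j. a (j + n))" using suminf_mult[OF tail] by simp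
  finally show ?thesis .
qed

theorem theorem5p5:
  fixes x a :: "nat \<Rightarrow> real" and n :: nat and P :: "real poly"
  assumes "bounded (range x)"
    and "infinite (range x)"
    and "\<And>j. a j > 0"
    and "summable a"
    and "n \<ge> 1"
    and "monic_orth_poly a x n P"
  shows "disc_L2norm a x P \<le>
           (SUP jk\<in>(UNIV :: (nat \<times> nat) set). \<bar>x (fst jk) - x (snd jk)\<bar>) ^ n
           * sqrt (\<Sum>j. a (j + n))"
proof -
  define d where "d = (SUP jk\<in>(UNIV :: (nat \<times> nat) set). \<bar>x (fst jk) - x (snd jk)\<bar>)"
  define Q where "Q = node_poly x n"
  have dist_le: "\<bar>x j - x k\<bar> \<le> d" for j k
    unfolding d_def using diameter_upper[OF assms(1)] .
  have nonneg: "a j \<ge> 0" for j using assms(3)[of j] by simp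
  have "(\<Sum>j. a j * (poly P (x j))\<^sup>2) \<le> (\<Sum>j. a j * (poly Q (x j))\<^sup>2)"
    unfolding Q_def
    by (rule monic_orth_poly_minimal[OF assms(1) nonneg assms(4,5,6)
          degree_node_poly lead_coeff_node_poly])
  also have "\<dots> \<le> (d ^ n)\<^sup>2 * (\<Sum>j. a (j + n))"
    unfolding Q_def
    by (rule weighted_sum_vanishing_prefix[OF nonneg assms(4)
          node_poly_vanishes node_poly_bound[OF dist_le]])
  finally have "sqrt (\<Sum>j. a j * (poly P (x j))\<^sup>2) \<le> sqrt ((d ^ n)\<^sup>2 * (\<Sum>j. a (j + n)))"
    by (rule real_sqrt_le_mono)
  also have "\<dots> = d ^ n * sqrt (\<Sum>j. a (j + n))"
    using dist_le[of 0 0] by (simp add: real_sqrt_mult)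
  finally show ?thesis unfolding disc_L2norm_def d_def .
qed

end
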